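(* Let $G$ be a finite directed graph. If $R\subseteq V(G)$ is nonempty and $\mathrm{DT}_R(G)$ has more than one maximal face, then there is an edge $(x\rightarrow y)\in E(G)$ which is nice in $\mathrm{DT}_R(G)$.
   Context: A directed forest in $G$ is a set of edges of $G$ which, viewed as a graph on $V(G)$, is acyclic and has at most one edge directed to each vertex; its roots are the vertices with no forest edge directed to them. $\mathrm{DT}(G)$ is the simplicial complex with vertex set $E(G)$ whose simplices are the directed forests; $\mathrm{DT}_R(G)$ is the subcomplex generated by the directed forests with root set exactly $R$. An edge $(x\rightarrow y)$ of $G$ is nice in a subcomplex $\Delta$ of $\mathrm{DT}(G)$ if (i) there is an edge $(z\rightarrow y)$ in $\Delta$ with $z\ne x$, and (ii) every forest $F\in\Delta$ without an edge directed to $y$ satisfies $F\cup\{(x\rightarrow y)\}\in\Delta$. *)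

theory Defs
  imports Main
begin

text \<open>A finite directed graph is given by a finite vertex set V and an edge set
  E \<subseteq> V \<times> V; an edge (x,y) is the edge x \<rightarrow> y.\<close>

definition digraph :: "'a set \<Rightarrow> ('a \<times> 'a) set \<Rightarrow> bool" where
  "digraph V E \<longleftrightarrow> finite V \<and> E \<subseteq> V \<times> V"

definition directed_forest :: "'a set \<Rightarrow> ('a \<times> 'a) set \<Rightarrow> ('a \<times> 'a) set \<Rightarrow> bool" where
  "directed_forest V E F \<longleftrightarrow> F \<subseteq> E \<and> acyclic F \<and>
     (\<forall>x y z. (x, y) \<in> F \<and> (z, y) \<in> F \<longrightarrow> x = z)"

definition roots :: "'a set \<Rightarrow> ('a \<times> 'a) set \<Rightarrow> 'a set" where
  "roots V F = {v \<in> V. \<not> (\<exists>u. (u, v) \<in> F)}"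

definition DT :: "'a set \<Rightarrow> ('a \<times> 'a) set \<Rightarrow> ('a \<times> 'a) set set" where
  "DT V E = {F. directed_forest V E F}"

definition DT_R :: "'a set \<Rightarrow> ('a \<times> 'a) set \<Rightarrow> 'a set \<Rightarrow> ('a \<times> 'a) set set" where
  "DT_R V E R = {F. \<exists>F'. directed_forest V E F' \<and> roots V F' = R \<and> F \<subseteq> F'}"

definition maximal_face :: "('a \<times> 'a) set set \<Rightarrow> ('a \<times> 'a) set \<Rightarrow> bool" where
  "maximal_face \<Delta> F \<longleftrightarrow> F \<in> \<Delta> \<and> \<not> (\<exists>F'\<in>\<Delta>. F \<subset> F')"

text \<open>An edge (x \<rightarrow> y) is nice in the subcomplex \<Delta>.  "An edge in \<Delta>" means a vertex
  of \<Delta>, i.e. a singleton face.\<close>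
definition nice :: "('a \<times> 'a) set set \<Rightarrow> 'a \<times> 'a \<Rightarrow> bool" where
  "nice \<Delta> e \<longleftrightarrow> (case e of (x, y) \<Rightarrow>
     (\<exists>z. z \<noteq> x \<and> {(z, y)} \<in> \<Delta>) \<and>
     (\<forall>F\<in>\<Delta>. \<not> (\<exists>u. (u, y) \<in> F) \<longrightarrow> insert (x, y) F \<in> \<Delta>))"

end

theory Submission
  imports Defs
begin

text \<open>Call an edge e of G a vertex of DT_R(G) if {e} is a face.  If no edge is nice,
  then for any two such edges (x \<rightarrow> y), (z \<rightarrow> y) with x \<noteq> z there is a path of complex
  vertices from y back to x: otherwise exchanging the edge into y of a forest for (x \<rightarrow> y)
  keeps a forest with root set R, which makes (x \<rightarrow> y) nice.  Two distinct maximal faces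
  are forests with root set R whose edges into some y differ, so the tail of one of them
  lies on a cycle of complex vertices; likewise the tail of every complex vertex entering
  such a cycle lies on one.  Hence following parents in a maximal face from a vertex on a
  cycle never stops, contradicting the acyclicity of this finite forest.\<close>

definition complex_vertices :: "('a \<times> 'a) set set \<Rightarrow> ('a \<times> 'a) set" where
  "complex_vertices \<Delta> = {e. {e} \<in> \<Delta>}"

lemma DT_R_subset_closed:
  assumes "F \<in> DT_R V E R" and "F' \<subseteq> F"
  shows "F' \<in> DT_R V E R"
  using assms unfolding DT_R_def by blast

lemma DT_R_subset_complex_vertices:
  assumes "F \<in> DT_R V E R"
  shows "F \<subseteq> complex_vertices (DT_R V E R)"
  using assms DT_R_subset_closed unfolding complex_vertices_def by blast

lemma complex_vertices_DT_R_D: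
  assumes "digraph V E" and "(x, y) \<in> complex_vertices (DT_R V E R)"
  shows "(x, y) \<in> E" and "y \<in> V" and "y \<notin> R"
proof -
  obtain F where "directed_forest V E F" "roots V F = R" "(x, y) \<in> F"
    using assms(2) unfolding complex_vertices_def DT_R_def by blast
  then show "(x, y) \<in> E" and "y \<notin> R"
    unfolding directed_forest_def roots_def by auto
  then show "y \<in> V"
    using assms(1) unfolding digraph_def by auto
qed

lemma in_edge_if_not_root:
  assumes "roots V F = R" and "v \<in> V" and "v \<notin> R"
  obtains u where "(u, v) \<in> F"
  using assms unfolding roots_def by auto

lemma maximal_face_DT_R:
  assumes "maximal_face (DT_R V E R) F"
  shows "directed_forest V E F" and "roots V F = R"
proof -
  obtain F' where F': "directed_forest V E F'" "roots V F' = R" "F \<subseteq> F'"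
    using assms unfolding maximal_face_def DT_R_def by blast
  then have "F' \<in> DT_R V E R"
    unfolding DT_R_def by blast
  with assms F'(3) have "F = F'"
    unfolding maximal_face_def by blast
  with F' show "directed_forest V E F" and "roots V F = R" by simp_all
qed

lemma directed_forest_exchange_in_edge:
  assumes forest: "directed_forest V E F" and "(w, y) \<in> F" and "(x, y) \<in> E"
    and no_path: "(y, x) \<notin> (F - {(w, y)})\<^sup>*"
  shows "directed_forest V E (insert (x, y) (F - {(w, y)}))"
    and "roots V (insert (x, y) (F - {(w, y)})) = roots V F"
proof -
  have "acyclic (F - {(w, y)})"
    using forest acyclic_subset unfolding directed_forest_def by blast
  with no_path have "acyclic (insert (x, y) (F - {(w, y)}))"
    by (simp add: acyclic_insert)
  with assms show "directed_forest V E (insert (x, y) (F - {(w, y)}))"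
    unfolding directed_forest_def by blast
  show "roots V (insert (x, y) (F - {(w, y)})) = roots V F"
    using \<open>(w, y) \<in> F\<close> unfolding roots_def by auto
qed

lemma nice_if_no_return_path:
  assumes dg: "digraph V E"
    and xy: "(x, y) \<in> complex_vertices (DT_R V E R)"
    and zy: "(z, y) \<in> complex_vertices (DT_R V E R)" and "z \<noteq> x"
    and no_path: "(y, x) \<notin> (complex_vertices (DT_R V E R))\<^sup>*"
  shows "nice (DT_R V E R) (x, y)"
  unfolding nice_def
proof (simp, intro conjI ballI impI)
  show "\<exists>z. z \<noteq> x \<and> {(z, y)} \<in> DT_R V E R"
    using zy \<open>z \<noteq> x\<close> unfolding complex_vertices_def by blast
next
  fix F assume "F \<in> DT_R V E R" and no_in_edge: "\<forall>u. (u, y) \<notin> F"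
  then obtain F' where F': "directed_forest V E F'" "roots V F' = R" "F \<subseteq> F'"
    unfolding DT_R_def by blast
  obtain w where w: "(w, y) \<in> F'"
    using in_edge_if_not_root[OF F'(2)] complex_vertices_DT_R_D[OF dg xy] by blast
  have "F' \<in> DT_R V E R"
    using F' unfolding DT_R_def by blast
  then have "(F' - {(w, y)})\<^sup>* \<subseteq> (complex_vertices (DT_R V E R))\<^sup>*"
    using DT_R_subset_complex_vertices by (intro rtrancl_mono) blast
  with no_path have "(y, x) \<notin> (F' - {(w, y)})\<^sup>*" by blast
  note exchange = directed_forest_exchange_in_edge[OF F'(1) w
      complex_vertices_DT_R_D(1)[OF dg xy] this]
  moreover have "insert (x, y) F \<subseteq> insert (x, y) (F' - {(w, y)})"
    using F'(3) no_in_edge by auto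
  ultimately show "insert (x, y) F \<in> DT_R V E R"
    using F'(2) unfolding DT_R_def by blast
qed

context
  fixes V :: "'a set" and E :: "('a \<times> 'a) set" and R :: "'a set"
  assumes dg: "digraph V E" and no_nice: "\<not> (\<exists>e\<in>E. nice (DT_R V E R) e)"
begin

lemma no_nice_edge_cycle:
  assumes xy: "(x, y) \<in> complex_vertices (DT_R V E R)"
    and "(z, y) \<in> complex_vertices (DT_R V E R)" and "z \<noteq> x"
  shows "(x, x) \<in> (complex_vertices (DT_R V E R))\<^sup>+"
proof -
  have "(y, x) \<in> (complex_vertices (DT_R V E R))\<^sup>*"
    using nice_if_no_return_path[OF dg assms] complex_vertices_DT_R_D(1)[OF dg xy] no_nice
    by blast
  with xy show ?thesis by (rule rtrancl_into_trancl2)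
qed

lemma no_nice_edge_predecessor_on_cycle:
  assumes "(c, c) \<in> (complex_vertices (DT_R V E R))\<^sup>+"
    and pc: "(p, c) \<in> complex_vertices (DT_R V E R)"
  shows "(p, p) \<in> (complex_vertices (DT_R V E R))\<^sup>+"
proof -
  obtain q where cq: "(c, q) \<in> (complex_vertices (DT_R V E R))\<^sup>*"
    and qc: "(q, c) \<in> complex_vertices (DT_R V E R)"
    using tranclD2[OF assms(1)] by blast
  show ?thesis
  proof (cases "p = q")
    case True
    with rtrancl_into_trancl2[OF qc cq] show ?thesis by simp
  next
    case False
    with no_nice_edge_cycle[OF pc qc] show ?thesis by blast
  qed
qed

end

theorem lemma2p6:
  fixes V :: "'a set" and E :: "('a \<times> 'a) set" and R :: "'a set"
  assumes "digraph V E"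
    and "R \<subseteq> V" and "R \<noteq> {}"
    and "\<exists>F1 F2. F1 \<noteq> F2 \<and> maximal_face (DT_R V E R) F1 \<and> maximal_face (DT_R V E R) F2"
  shows "\<exists>e\<in>E. nice (DT_R V E R) e"
proof (rule ccontr)
  assume no_nice: "\<not> ?thesis"
  let ?U = "complex_vertices (DT_R V E R)"
  let ?C = "{c. (c, c) \<in> ?U\<^sup>+}"
  obtain T1 T2 where "T1 \<noteq> T2"
    and T1: "maximal_face (DT_R V E R) T1" and T2: "maximal_face (DT_R V E R) T2"
    using assms(4) by blast
  have T1_U: "T1 \<subseteq> ?U" and T2_U: "T2 \<subseteq> ?U"
    using T1 T2 DT_R_subset_complex_vertices[of _ V E R] unfolding maximal_face_def by simp_all
  have "\<not> T1 \<subseteq> T2"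
    using T1 T2 \<open>T1 \<noteq> T2\<close> unfolding maximal_face_def by blast
  then obtain a y where ay: "(a, y) \<in> T1" "(a, y) \<notin> T2" by auto
  with T1_U have "y \<in> V" "y \<notin> R"
    using complex_vertices_DT_R_D[OF assms(1), of a y] by blast+
  then obtain b where "(b, y) \<in> T2"
    using in_edge_if_not_root[OF maximal_face_DT_R(2)[OF T2]] by blast
  with ay T1_U T2_U have a_C: "a \<in> ?C"
    using no_nice_edge_cycle[OF assms(1) no_nice, of a y b] by blast
  have "wf T1"
    using maximal_face_DT_R(1)[OF T1] assms(1) finite_subset[of T1 "V \<times> V"]
    unfolding directed_forest_def digraph_def by (blast intro: finite_acyclic_wf)
  then obtain c where c_C: "c \<in> ?C" and c_min: "\<And>p. (p, c) \<in> T1 \<Longrightarrow> p \<notin> ?C"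
    using a_C by (rule wfE_min) blast
  then obtain q where "(q, c) \<in> ?U"
    using tranclD2 by fastforce
  then have "c \<in> V" "c \<notin> R"
    using complex_vertices_DT_R_D[OF assms(1)] by blast+
  then obtain p where "(p, c) \<in> T1"
    using in_edge_if_not_root[OF maximal_face_DT_R(2)[OF T1]] by blast
  with c_C T1_U have "p \<in> ?C"
    using no_nice_edge_predecessor_on_cycle[OF assms(1) no_nice] by blast
  with c_min \<open>(p, c) \<in> T1\<close> show False by blast
qed

end
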